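(* Let $\alpha$ be an algebraic number of degree $3$ such that $\mathbb Q(\alpha)/\mathbb Q$ is not a Galois extension. Let $\alpha_1=\alpha,\alpha_2,\alpha_3$ be the conjugates of $\alpha$ over $\mathbb Q$, and assume that the field $\mathbb Q(\alpha_1,\alpha_2,\alpha_3)$ contains no primitive cube root of unity. If $\xi_1,\xi_2,\xi_3$ are roots of unity with $\alpha_1\xi_1+\alpha_2\xi_2+\alpha_3\xi_3=0$, then $\xi_1=\xi_2=\xi_3$, and consequently $\alpha_1+\alpha_2+\alpha_3=0$. *)

theory Defs
  imports Complex_Main "HOL-Computational_Algebra.Computational_Algebra"
begin

definition is_subfield :: "complex set \<Rightarrow> bool" where
  "is_subfield K \<longleftrightarrow> 0 \<in> K \<and> 1 \<in> K \<and>
     (\<forall>x\<in>K. \<forall>y\<in>K. x + y \<in> K \<and> x - y \<in> K \<and> x * y \<in> K) \<and>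
     (\<forall>x\<in>K. x \<noteq> 0 \<longrightarrow> inverse x \<in> K)"

definition gen_field :: "complex set \<Rightarrow> complex set" where
  "gen_field A = \<Inter>{K. is_subfield K \<and> A \<subseteq> K}"

definition algebraic_over_Q :: "complex \<Rightarrow> bool" where
  "algebraic_over_Q x \<longleftrightarrow> (\<exists>q :: rat poly. q \<noteq> 0 \<and> poly (map_poly of_rat q) x = 0)"

text \<open>A subfield K of C is a Galois extension of Q: algebraic, normal (every irreducible
  rational polynomial with a root in K has all its roots in K), and separable
  (automatic in characteristic 0, but stated for completeness).\<close>
definition galois_over_Q :: "complex set \<Rightarrow> bool" where
  "galois_over_Q K \<longleftrightarrow> is_subfield K \<and> (\<forall>x\<in>K. algebraic_over_Q x) \<and>
     (\<forall>q :: rat poly. irreducible q \<longrightarrow> (\<exists>x\<in>K. poly (map_poly of_rat q) x = 0) \<longrightarrow>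
        (\<forall>x. poly (map_poly of_rat q) x = 0 \<longrightarrow> x \<in> K)) \<and>
     (\<forall>q :: rat poly. irreducible q \<longrightarrow> (\<exists>x\<in>K. poly (map_poly of_rat q) x = 0) \<longrightarrow>
        rsquarefree (map_poly (of_rat :: rat \<Rightarrow> complex) q))"

definition root_of_unity :: "complex \<Rightarrow> bool" where
  "root_of_unity z \<longleftrightarrow> (\<exists>n::nat. n > 0 \<and> z ^ n = 1)"

definition primitive_cube_root_of_unity :: "complex \<Rightarrow> bool" where
  "primitive_cube_root_of_unity z \<longleftrightarrow> z ^ 3 = 1 \<and> z \<noteq> 1"

end

theory Submission
  imports Defs "HOL-Computational_Algebra.Field_as_Ring"
begin

text \<open>Choose \<open>N\<close> with \<open>\<xi>\<^sub>i\<^sup>N = 1\<close> and let \<open>F = \<rat>(\<zeta>)\<close> for \<open>\<zeta> = e\<^sup>2\<^sup>\<pi>\<^sup>i\<^sup>/\<^sup>N\<close>.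
  First, \<open>F\<close> contains no root of \<open>p\<close>: the conjugations \<open>\<zeta> \<mapsto> \<zeta>\<^sup>k\<close> commute, so a root in \<open>F\<close> would
  put all roots in \<open>F\<close> and every conjugation would permute them evenly; the Vandermonde product
  \<open>(\<alpha>\<^sub>1 - \<alpha>\<^sub>2)(\<alpha>\<^sub>1 - \<alpha>\<^sub>3)(\<alpha>\<^sub>2 - \<alpha>\<^sub>3)\<close> would then be rational, making \<open>\<rat>(\<alpha>\<^sub>1)\<close> normal.

  Dividing the relation by \<open>\<xi>\<^sub>3\<close> gives \<open>a \<alpha>\<^sub>1 + b \<alpha>\<^sub>2 + \<alpha>\<^sub>3 = 0\<close> with \<open>a, b \<in> F\<close>. If \<open>b \<noteq> 1\<close>,
  then \<open>\<alpha>\<^sub>2 = c \<alpha>\<^sub>1 + d\<close> with \<open>c, d \<in> F\<close>. As \<open>p\<close> stays irreducible over \<open>F\<close>, the polynomial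
  \<open>P(c x + d) - c\<^sup>3 P(x)\<close> (with \<open>P = \<Prod>(x - \<alpha>\<^sub>i)\<close>), of degree at most 2 over \<open>F\<close> and vanishing at \<open>\<alpha>\<^sub>1\<close>,
  is zero. So \<open>x \<mapsto> c x + d\<close> permutes the roots; a transposition would fix a root lying in \<open>F\<close>,
  hence it is a 3-cycle and \<open>c \<in> \<rat>(\<alpha>\<^sub>1, \<alpha>\<^sub>2, \<alpha>\<^sub>3)\<close> is a primitive cube root of unity. Thus
  \<open>b = 1\<close>, and symmetrically \<open>a = 1\<close>.\<close>

abbreviation of_rat_poly :: "rat poly \<Rightarrow> 'a::field_char_0 poly" where
  "of_rat_poly \<equiv> map_poly of_rat"

lemma of_rat_poly_pCons [simp]: "of_rat_poly (pCons a p) = pCons (of_rat a) (of_rat_poly p)"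
  by (simp add: map_poly_pCons)

lemma of_rat_poly_add [simp]: "of_rat_poly (p + q) = of_rat_poly p + of_rat_poly q"
  by (rule poly_eqI) (simp add: coeff_map_poly of_rat_add)

lemma of_rat_poly_diff [simp]: "of_rat_poly (p - q) = of_rat_poly p - of_rat_poly q"
  by (rule poly_eqI) (simp add: coeff_map_poly of_rat_diff)

lemma of_rat_poly_smult [simp]: "of_rat_poly (smult c p) = smult (of_rat c) (of_rat_poly p)"
  by (rule poly_eqI) (simp add: coeff_map_poly of_rat_mult)

lemma of_rat_poly_mult [simp]: "of_rat_poly (p * q) = of_rat_poly p * of_rat_poly q"
  by (induction p) simp_all

lemma of_rat_poly_pcompose [simp]:
  "of_rat_poly (pcompose p q) = pcompose (of_rat_poly p) (of_rat_poly q)"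
  by (induction p) (simp_all add: pcompose_pCons)

lemma of_rat_poly_monom [simp]: "of_rat_poly (monom c n) = monom (of_rat c) n"
  by (simp add: map_poly_monom)

lemma of_rat_poly_pderiv [simp]: "of_rat_poly (pderiv p) = pderiv (of_rat_poly p)"
  by (rule poly_eqI) (simp add: coeff_map_poly coeff_pderiv of_rat_mult of_rat_add)

lemma degree_of_rat_poly [simp]: "degree (of_rat_poly p) = degree p"
  by (rule degree_map_poly) simp

lemma of_rat_poly_eq_0_iff [simp]: "of_rat_poly p = 0 \<longleftrightarrow> p = 0"
  by (rule map_poly_eq_0_iff) auto

lemma poly_of_rat_poly_of_rat [simp]: "poly (of_rat_poly p) (of_rat c) = of_rat (poly p c)"
  by (induction p) (simp_all add: of_rat_add of_rat_mult)

lemma irreducible_bezout: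
  fixes m h :: "rat poly"
  assumes "irreducible m" "\<not> m dvd h"
  obtains a b where "a * m + b * h = 1"
proof -
  from assms have "coprime m h" by (meson coprimeI dvd_trans irreducibleD')
  thus ?thesis using that bezout_coefficients_fst_snd[of m h] by (metis coprime_imp_gcd_eq_1)
qed

lemma irreducible_dvd_if_common_root:
  fixes m h :: "rat poly" and z :: "'a::field_char_0"
  assumes "irreducible m" "poly (of_rat_poly m) z = 0" "poly (of_rat_poly h) z = 0"
  shows "m dvd h"
proof (rule ccontr)
  assume "\<not> m dvd h"
  with assms(1) obtain a b where "a * m + b * h = 1" by (rule irreducible_bezout)
  hence "poly (of_rat_poly (a * m + b * h)) z = 1" by simp
  with assms(2,3) show False by simp
qed

lemma poly_eq_at_conjugate:
  fixes m f g :: "rat poly" and z w :: "'a::field_char_0"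
  assumes "irreducible m" "poly (of_rat_poly m) z = 0" "poly (of_rat_poly m) w = 0"
    and "poly (of_rat_poly f) z = poly (of_rat_poly g) z"
  shows "poly (of_rat_poly f) w = poly (of_rat_poly g) w"
proof -
  have "m dvd f - g"
    using irreducible_dvd_if_common_root[OF assms(1,2), of "f - g"] assms(4) by simp
  then obtain k where "f - g = m * k" ..
  hence "poly (of_rat_poly (f - g)) w = 0" using assms(3) by simp
  thus ?thesis by simp
qed

lemma degree_irreducible_pos: "irreducible (m :: rat poly) \<Longrightarrow> degree m > 0"
  by (metis gr0I irreducible_def is_unit_iff_degree irreducible_not_unit)

lemma rsquarefree_of_rat_poly_irreducible:
  assumes "irreducible (q :: rat poly)"
  shows "rsquarefree (of_rat_poly q :: 'a::field_char_0 poly)"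
  unfolding rsquarefree_roots
proof (intro allI notI)
  fix a :: 'a assume "poly (of_rat_poly q) a = 0 \<and> poly (pderiv (of_rat_poly q)) a = 0"
  hence "q dvd pderiv q"
    using irreducible_dvd_if_common_root[OF assms, of a "pderiv q"] by simp
  moreover have "pderiv q \<noteq> 0"
    using degree_irreducible_pos[OF assms] by (simp add: pderiv_eq_0_iff)
  ultimately have "degree q \<le> degree (pderiv q)" using dvd_imp_degree_le by blast
  thus False using degree_irreducible_pos[OF assms] degree_pderiv[of q] by simp
qed

lemma card_roots_irreducible:
  assumes "irreducible (q :: rat poly)"
  shows "card {z :: complex. poly (of_rat_poly q) z = 0} = degree q"
proof -
  let ?Q = "of_rat_poly q :: complex poly"
  have "?Q = smult (lead_coeff ?Q) (\<Prod>z | poly ?Q z = 0. [:-z, 1:])"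
    using complex_poly_decompose_rsquarefree[OF rsquarefree_of_rat_poly_irreducible[OF assms]]
    by (rule sym)
  moreover have "lead_coeff ?Q \<noteq> 0"
    using assms leading_coeff_0_iff of_rat_poly_eq_0_iff unfolding irreducible_def by blast
  ultimately have "degree ?Q = degree (\<Prod>z | poly ?Q z = 0. [:-z, 1:])"
    by (metis degree_smult_eq)
  also have "\<dots> = (\<Sum>z | poly ?Q z = 0. degree [:-z, 1:])"
    by (rule degree_prod_sum_eq) auto
  finally show ?thesis by simp
qed

text \<open>The value is the constant term of \<open>g mod m\<close>: a nonconstant remainder would take it at
  more points than its degree allows.\<close>
lemma rational_if_constant_on_conjugates:
  fixes c :: complex
  assumes m: "irreducible m"
    and const: "\<And>z. poly (of_rat_poly m) z = 0 \<Longrightarrow> poly (of_rat_poly g) z = c"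
  shows "c \<in> \<rat>"
proof -
  define r where "r = g mod m"
  have r_c: "poly (of_rat_poly r) z = c" if "poly (of_rat_poly m) z = 0" for z
  proof -
    have "g = m * (g div m) + r" by (simp add: r_def)
    hence "poly (of_rat_poly g) z = poly (of_rat_poly r) z"
      by (metis that add_0 mult_zero_left of_rat_poly_add of_rat_poly_mult poly_add poly_mult)
    thus ?thesis using const[OF that] by simp
  qed
  have "m \<noteq> 0" using m by (simp add: irreducible_def)
  hence "degree r < degree m"
    using degree_mod_less[of m g] degree_irreducible_pos[OF m] by (auto simp: r_def)
  define Q where "Q = of_rat_poly r - [:c:]"
  show ?thesis
  proof (cases "Q = 0")
    case True
    hence "c = coeff (of_rat_poly r) 0" by (simp add: Q_def)
    thus ?thesis by (simp add: coeff_map_poly)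
  next
    case False
    have "{z :: complex. poly (of_rat_poly m) z = 0} \<subseteq> {z. poly Q z = 0}"
      using r_c by (auto simp: Q_def)
    hence "card {z :: complex. poly (of_rat_poly m) z = 0} \<le> card {z. poly Q z = 0}"
      by (rule card_mono[OF poly_roots_finite[OF False]])
    also have "\<dots> \<le> degree Q" by (rule card_poly_roots_bound[OF False])
    also have "\<dots> \<le> degree r"
      using degree_diff_le_max[of "of_rat_poly r" "[:c:]"] by (simp add: Q_def)
    finally show ?thesis using card_roots_irreducible[OF m] \<open>degree r < degree m\<close> by simp
  qed
qed

lemma
  assumes "is_subfield K"
  shows subfield_zero: "0 \<in> K" and subfield_one: "1 \<in> K"
    and subfield_add: "x \<in> K \<Longrightarrow> y \<in> K \<Longrightarrow> x + y \<in> K"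
    and subfield_diff: "x \<in> K \<Longrightarrow> y \<in> K \<Longrightarrow> x - y \<in> K"
    and subfield_mult: "x \<in> K \<Longrightarrow> y \<in> K \<Longrightarrow> x * y \<in> K"
    and subfield_inverse: "x \<in> K \<Longrightarrow> inverse x \<in> K"
  using assms unfolding is_subfield_def by auto

lemma subfield_divide: "is_subfield K \<Longrightarrow> x \<in> K \<Longrightarrow> y \<in> K \<Longrightarrow> x / y \<in> K"
  by (simp add: divide_inverse subfield_mult subfield_inverse)

lemma subfield_uminus: "is_subfield K \<Longrightarrow> x \<in> K \<Longrightarrow> - x \<in> K"
  using subfield_diff[of K 0 x] subfield_zero by simp

lemma subfield_power: "is_subfield K \<Longrightarrow> x \<in> K \<Longrightarrow> x ^ n \<in> K"
  by (induction n) (simp_all add: subfield_one subfield_mult)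

lemma subfield_of_nat: "is_subfield K \<Longrightarrow> of_nat n \<in> K"
  by (induction n) (simp_all add: subfield_zero subfield_one subfield_add)

lemma subfield_numeral: "is_subfield K \<Longrightarrow> numeral n \<in> K"
  using subfield_of_nat[of K "numeral n"] by simp

lemma subfield_of_int: "is_subfield K \<Longrightarrow> of_int n \<in> K"
  by (cases n) (simp_all add: subfield_of_nat subfield_uminus del: of_nat_Suc)

lemma subfield_Rats: "is_subfield K \<Longrightarrow> x \<in> \<rat> \<Longrightarrow> x \<in> K"
  by (metis Rats_cases' of_int_of_nat_eq of_real_of_int_eq subfield_divide subfield_of_int)

lemmas subfield_closed =
  subfield_add subfield_diff subfield_mult subfield_divide subfield_uminus subfield_power
  subfield_numeral

lemma subfield_poly_of_rat_poly: "is_subfield K \<Longrightarrow> z \<in> K \<Longrightarrow> poly (of_rat_poly g) z \<in> K"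
  by (induction g) (simp_all add: subfield_zero subfield_add subfield_mult subfield_Rats)

lemma is_subfield_gen_field: "is_subfield (gen_field A)"
  unfolding gen_field_def is_subfield_def by auto

lemma gen_field_superset: "A \<subseteq> gen_field A"
  unfolding gen_field_def by auto

lemma gen_field_least: "is_subfield K \<Longrightarrow> A \<subseteq> K \<Longrightarrow> gen_field A \<subseteq> K"
  unfolding gen_field_def by auto

definition rat_adjoin :: "complex \<Rightarrow> complex set" where
  "rat_adjoin z = range (\<lambda>g. poly (of_rat_poly g) z)"

lemma poly_in_rat_adjoin [simp]: "poly (of_rat_poly g) z \<in> rat_adjoin z"
  unfolding rat_adjoin_def by blast

lemma in_rat_adjoin_self: "z \<in> rat_adjoin z"
  using poly_in_rat_adjoin[of "[:0, 1:]" z] by simp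

lemma is_subfield_rat_adjoin:
  assumes m: "irreducible m" "poly (of_rat_poly m) z = 0"
  shows "is_subfield (rat_adjoin z)"
  unfolding is_subfield_def
proof (intro conjI ballI impI)
  show "0 \<in> rat_adjoin z" using poly_in_rat_adjoin[of 0 z] by simp
  show "1 \<in> rat_adjoin z" using poly_in_rat_adjoin[of 1 z] by simp
  fix x y assume "x \<in> rat_adjoin z" "y \<in> rat_adjoin z"
  then obtain f g where fg: "x = poly (of_rat_poly f) z" "y = poly (of_rat_poly g) z"
    by (auto simp: rat_adjoin_def)
  show "x + y \<in> rat_adjoin z" using poly_in_rat_adjoin[of "f + g" z] fg by simp
  show "x - y \<in> rat_adjoin z" using poly_in_rat_adjoin[of "f - g" z] fg by simp
  show "x * y \<in> rat_adjoin z" using poly_in_rat_adjoin[of "f * g" z] fg by simp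
next
  fix x assume "x \<in> rat_adjoin z" "x \<noteq> 0"
  then obtain f where f: "x = poly (of_rat_poly f) z" by (auto simp: rat_adjoin_def)
  have "\<not> m dvd f" using \<open>x \<noteq> 0\<close> f m(2) by (auto elim!: dvdE)
  with m(1) obtain a b where "a * m + b * f = 1" by (rule irreducible_bezout)
  hence "poly (of_rat_poly (a * m + b * f)) z = 1" by simp
  hence "inverse x = poly (of_rat_poly b) z"
    using m(2) f by (simp add: inverse_unique mult.commute)
  thus "inverse x \<in> rat_adjoin z" by simp
qed

lemma gen_field_singleton_eq_rat_adjoin:
  assumes "irreducible m" "poly (of_rat_poly m) z = 0"
  shows "gen_field {z} = rat_adjoin z"
proof
  show "gen_field {z} \<subseteq> rat_adjoin z"
    using gen_field_least[OF is_subfield_rat_adjoin[OF assms]] in_rat_adjoin_self by simp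
  have "z \<in> gen_field {z}" using gen_field_superset by blast
  thus "rat_adjoin z \<subseteq> gen_field {z}"
    using subfield_poly_of_rat_poly[OF is_subfield_gen_field] by (auto simp: rat_adjoin_def)
qed

lemma root_pcompose_at_conjugate:
  fixes z w :: "'a::field_char_0"
  assumes "irreducible m" "poly (of_rat_poly m) z = 0" "poly (of_rat_poly m) w = 0"
    and "poly (of_rat_poly q) (poly (of_rat_poly h) z) = 0"
  shows "poly (of_rat_poly q) (poly (of_rat_poly h) w) = 0"
  using poly_eq_at_conjugate[OF assms(1-3), of "pcompose q h" 0] assms(4)
  by (simp add: poly_pcompose)

lemma elementary_symmetric_perm3:
  fixes f :: "'a \<Rightarrow> 'b::comm_ring"
  assumes "b1 \<in> {a1, a2, a3}" "b2 \<in> {a1, a2, a3}" "b3 \<in> {a1, a2, a3}"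
    and "b1 \<noteq> b2" "b1 \<noteq> b3" "b2 \<noteq> b3"
  shows "f b1 + f b2 + f b3 = f a1 + f a2 + f a3"
    and "f b1 * f b2 + f b1 * f b3 + f b2 * f b3 = f a1 * f a2 + f a1 * f a3 + f a2 * f a3"
    and "f b1 * f b2 * f b3 = f a1 * f a2 * f a3"
proof -
  have "(b1 = a1 \<and> b2 = a2 \<and> b3 = a3) \<or> (b1 = a1 \<and> b2 = a3 \<and> b3 = a2) \<or>
        (b1 = a2 \<and> b2 = a1 \<and> b3 = a3) \<or> (b1 = a2 \<and> b2 = a3 \<and> b3 = a1) \<or>
        (b1 = a3 \<and> b2 = a1 \<and> b3 = a2) \<or> (b1 = a3 \<and> b2 = a2 \<and> b3 = a1)"
    using assms by blast
  thus "f b1 + f b2 + f b3 = f a1 + f a2 + f a3"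
    "f b1 * f b2 + f b1 * f b3 + f b2 * f b3 = f a1 * f a2 + f a1 * f a3 + f a2 * f a3"
    "f b1 * f b2 * f b3 = f a1 * f a2 * f a3"
    by (elim disjE; simp add: ac_simps)+
qed

lemma vandermonde3_even_perm:
  fixes a1 a2 a3 v1 v2 v3 :: "'a::comm_ring"
  assumes "v1 \<in> {a1, a2, a3}" "v2 \<in> {a1, a2, a3}" "v3 \<in> {a1, a2, a3}"
    and "v1 \<noteq> v2" "v1 \<noteq> v3" "v2 \<noteq> v3"
    and no_transposition: "(v1 = a1 \<and> v2 = a2) \<or> (v1 = a1 \<and> v3 = a3) \<or> (v2 = a2 \<and> v3 = a3) \<or>
      (v1 \<noteq> a1 \<and> v2 \<noteq> a2 \<and> v3 \<noteq> a3)"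
  shows "(v1 - v2) * (v1 - v3) * (v2 - v3) = (a1 - a2) * (a1 - a3) * (a2 - a3)"
proof -
  have "(v1 = a1 \<and> v2 = a2 \<and> v3 = a3) \<or> (v1 = a2 \<and> v2 = a3 \<and> v3 = a1) \<or>
        (v1 = a3 \<and> v2 = a1 \<and> v3 = a2)"
    using assms by blast
  thus ?thesis by (elim disjE) (simp_all add: algebra_simps)
qed

locale rat_cubic =
  fixes p :: "rat poly" and \<alpha>1 \<alpha>2 \<alpha>3 :: complex
  assumes p_irreducible: "irreducible p" and p_degree: "degree p = 3"
    and roots: "poly (of_rat_poly p) \<alpha>1 = 0" "poly (of_rat_poly p) \<alpha>2 = 0"
      "poly (of_rat_poly p) \<alpha>3 = 0"
    and roots_distinct: "\<alpha>1 \<noteq> \<alpha>2" "\<alpha>1 \<noteq> \<alpha>3" "\<alpha>2 \<noteq> \<alpha>3"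
begin

lemma p_nonzero: "p \<noteq> 0"
  using p_degree by auto

lemma of_rat_poly_p:
  "of_rat_poly p = smult (of_rat (lead_coeff p)) ([:-\<alpha>1, 1:] * [:-\<alpha>2, 1:] * [:-\<alpha>3, 1:])"
proof -
  obtain q1 where q1: "of_rat_poly p = [:-\<alpha>1, 1:] * q1"
    using roots(1) poly_eq_0_iff_dvd by blast
  have "poly q1 \<alpha>2 = 0" using roots(2) roots_distinct(1) q1 by simp
  then obtain q2 where q2: "q1 = [:-\<alpha>2, 1:] * q2" using poly_eq_0_iff_dvd by blast
  have "poly q2 \<alpha>3 = 0" using roots(3) roots_distinct(2,3) q1 q2 by simp
  then obtain q3 where q3: "q2 = [:-\<alpha>3, 1:] * q3" using poly_eq_0_iff_dvd by blast
  define C where "C = [:-\<alpha>1, 1:] * [:-\<alpha>2, 1:] * [:-\<alpha>3, 1:]"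
  have p_C: "of_rat_poly p = C * q3" using q1 q2 q3 unfolding C_def by (metis mult.assoc)
  have C: "degree C = 3" "lead_coeff C = 1"
    unfolding C_def by (simp_all add: degree_mult_eq lead_coeff_mult)
  have "q3 \<noteq> 0" using p_C p_degree by auto
  hence "degree (of_rat_poly p :: complex poly) = degree C + degree q3"
    unfolding p_C using C by (intro degree_mult_eq) auto
  hence "degree q3 = 0" using p_degree C by simp
  then obtain c where c: "q3 = [:c:]" by (metis degree_eq_zeroE)
  have "lead_coeff (of_rat_poly p :: complex poly) = of_rat (lead_coeff p)"
    by (simp add: coeff_map_poly)
  hence "c = of_rat (lead_coeff p)" using p_C c C \<open>q3 \<noteq> 0\<close> by (simp add: lead_coeff_mult)
  thus ?thesis using p_C c by (simp add: C_def mult.commute)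
qed

lemma poly_p:
  "poly (of_rat_poly p) x = of_rat (lead_coeff p) * ((x - \<alpha>1) * (x - \<alpha>2) * (x - \<alpha>3))"
  by (subst of_rat_poly_p) (simp add: algebra_simps)

lemma root_iff: "poly (of_rat_poly p) x = 0 \<longleftrightarrow> x \<in> {\<alpha>1, \<alpha>2, \<alpha>3}"
  using p_nonzero by (auto simp: poly_p)

lemma elementary_symmetric_rational:
  shows "\<alpha>1 + \<alpha>2 + \<alpha>3 \<in> \<rat>" and "\<alpha>1 * \<alpha>2 + \<alpha>1 * \<alpha>3 + \<alpha>2 * \<alpha>3 \<in> \<rat>"
    and "\<alpha>1 * \<alpha>2 * \<alpha>3 \<in> \<rat>"
proof -
  define l where "l = (of_rat (lead_coeff p) :: complex)"
  have "l \<noteq> 0" "l \<in> \<rat>" using p_nonzero by (simp_all add: l_def)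
  hence rat: "x \<in> \<rat>" if "l * x \<in> \<rat>" for x
    using Rats_divide[OF that \<open>l \<in> \<rat>\<close>] by simp
  have coeff: "coeff (of_rat_poly p) k \<in> \<rat>" for k by (simp add: coeff_map_poly)
  have "[:-\<alpha>1, 1:] * [:-\<alpha>2, 1:] * [:-\<alpha>3, 1:] =
      [:-(\<alpha>1 * \<alpha>2 * \<alpha>3), \<alpha>1 * \<alpha>2 + \<alpha>1 * \<alpha>3 + \<alpha>2 * \<alpha>3, -(\<alpha>1 + \<alpha>2 + \<alpha>3), 1:]"
    by (simp add: algebra_simps)
  hence coeff_p: "of_rat_poly p = smult l
      [:-(\<alpha>1 * \<alpha>2 * \<alpha>3), \<alpha>1 * \<alpha>2 + \<alpha>1 * \<alpha>3 + \<alpha>2 * \<alpha>3, -(\<alpha>1 + \<alpha>2 + \<alpha>3), 1:]"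
    using of_rat_poly_p by (simp add: l_def)
  have "- l * (\<alpha>1 + \<alpha>2 + \<alpha>3) = coeff (of_rat_poly p) 2"
    by (simp add: coeff_p numeral_2_eq_2 algebra_simps)
  thus "\<alpha>1 + \<alpha>2 + \<alpha>3 \<in> \<rat>"
    using coeff[of 2] rat by (metis Rats_minus_iff mult_minus_left)
  have "l * (\<alpha>1 * \<alpha>2 + \<alpha>1 * \<alpha>3 + \<alpha>2 * \<alpha>3) = coeff (of_rat_poly p) 1"
    by (simp add: coeff_p)
  thus "\<alpha>1 * \<alpha>2 + \<alpha>1 * \<alpha>3 + \<alpha>2 * \<alpha>3 \<in> \<rat>"
    using coeff[of 1] rat by metis
  have "- l * (\<alpha>1 * \<alpha>2 * \<alpha>3) = coeff (of_rat_poly p) 0"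
    by (simp add: coeff_p)
  thus "\<alpha>1 * \<alpha>2 * \<alpha>3 \<in> \<rat>"
    using coeff[of 0] rat by (metis Rats_minus_iff mult_minus_left)
qed

lemma root_not_rational:
  assumes "poly (of_rat_poly p) z = 0"
  shows "z \<notin> \<rat>"
proof
  assume "z \<in> \<rat>"
  then obtain c where c: "z = of_rat c" by (auto elim: Rats_cases)
  hence "poly p c = 0" using assms by simp
  then obtain q where q: "p = [:-c, 1:] * q" using poly_eq_0_iff_dvd by blast
  hence "q \<noteq> 0" using p_degree by auto
  have "degree ([:-c, 1:] * q) = degree [:-c, 1:] + degree q"
    by (rule degree_mult_eq) (use \<open>q \<noteq> 0\<close> in auto)
  hence "degree q = 2" using q p_degree by simp
  hence "\<not> is_unit q" "\<not> is_unit [:-c, 1:]"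
    using \<open>q \<noteq> 0\<close> by (simp_all add: is_unit_iff_degree)
  thus False using p_irreducible q irreducibleD by blast
qed

definition vandermonde :: complex where
  "vandermonde = (\<alpha>1 - \<alpha>2) * (\<alpha>1 - \<alpha>3) * (\<alpha>2 - \<alpha>3)"

lemma is_subfield_rat_adjoin_root: "is_subfield (rat_adjoin \<alpha>1)"
  by (rule is_subfield_rat_adjoin[OF p_irreducible roots(1)])

lemma roots_in_rat_adjoin_if_vandermonde_rational:
  assumes "vandermonde \<in> \<rat>"
  shows "\<alpha>2 \<in> rat_adjoin \<alpha>1" and "\<alpha>3 \<in> rat_adjoin \<alpha>1"
proof -
  let ?K = "rat_adjoin \<alpha>1"
  note K = is_subfield_rat_adjoin_root
  have \<alpha>1: "\<alpha>1 \<in> ?K" by (rule in_rat_adjoin_self)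
  have e2: "\<alpha>1 + \<alpha>2 + \<alpha>3 \<in> ?K" and e1: "\<alpha>1 * \<alpha>2 + \<alpha>1 * \<alpha>3 + \<alpha>2 * \<alpha>3 \<in> ?K"
    using elementary_symmetric_rational subfield_Rats[OF K] by simp_all
  have "\<alpha>2 + \<alpha>3 = (\<alpha>1 + \<alpha>2 + \<alpha>3) - \<alpha>1" by simp
  hence sum: "\<alpha>2 + \<alpha>3 \<in> ?K" using e2 \<alpha>1 subfield_diff[OF K] by metis
  have "\<alpha>2 * \<alpha>3 = (\<alpha>1 * \<alpha>2 + \<alpha>1 * \<alpha>3 + \<alpha>2 * \<alpha>3) - \<alpha>1 * (\<alpha>2 + \<alpha>3)"
    by (simp add: algebra_simps)
  hence prod: "\<alpha>2 * \<alpha>3 \<in> ?K" using e1 sum \<alpha>1 by (metis K subfield_diff subfield_mult)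
  have "(\<alpha>1 - \<alpha>2) * (\<alpha>1 - \<alpha>3) = \<alpha>1 * \<alpha>1 - \<alpha>1 * (\<alpha>2 + \<alpha>3) + \<alpha>2 * \<alpha>3"
    by (simp add: algebra_simps)
  hence "(\<alpha>1 - \<alpha>2) * (\<alpha>1 - \<alpha>3) \<in> ?K"
    using sum prod \<alpha>1 by (metis K subfield_add subfield_diff subfield_mult)
  moreover have "\<alpha>2 - \<alpha>3 = vandermonde / ((\<alpha>1 - \<alpha>2) * (\<alpha>1 - \<alpha>3))"
    using roots_distinct by (simp add: vandermonde_def)
  ultimately have diff: "\<alpha>2 - \<alpha>3 \<in> ?K" using assms by (metis K subfield_divide subfield_Rats)
  have "\<alpha>2 = ((\<alpha>2 + \<alpha>3) + (\<alpha>2 - \<alpha>3)) / 2" by simp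
  thus \<alpha>2: "\<alpha>2 \<in> ?K" using sum diff by (metis K subfield_add subfield_divide subfield_numeral)
  have "\<alpha>3 = (\<alpha>2 + \<alpha>3) - \<alpha>2" by simp
  thus "\<alpha>3 \<in> ?K" using sum \<alpha>2 subfield_diff[OF K] by metis
qed

lemma images_of_conjugate_roots:
  assumes h2: "\<alpha>2 = poly (of_rat_poly h2) \<alpha>1" and h3: "\<alpha>3 = poly (of_rat_poly h3) \<alpha>1"
    and z: "poly (of_rat_poly p) z = 0"
  shows "poly (of_rat_poly h2) z \<in> {\<alpha>1, \<alpha>2, \<alpha>3}" and "poly (of_rat_poly h3) z \<in> {\<alpha>1, \<alpha>2, \<alpha>3}"
    and "z \<noteq> poly (of_rat_poly h2) z" and "z \<noteq> poly (of_rat_poly h3) z"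
    and "poly (of_rat_poly h2) z \<noteq> poly (of_rat_poly h3) z"
proof -
  note to_z = root_pcompose_at_conjugate[OF p_irreducible roots(1) z, of p]
  show "poly (of_rat_poly h2) z \<in> {\<alpha>1, \<alpha>2, \<alpha>3}" "poly (of_rat_poly h3) z \<in> {\<alpha>1, \<alpha>2, \<alpha>3}"
    using to_z[of h2] to_z[of h3] h2 h3 roots by (simp_all add: root_iff)
  note to_\<alpha>1 = poly_eq_at_conjugate[OF p_irreducible z roots(1)]
  show "z \<noteq> poly (of_rat_poly h2) z" "z \<noteq> poly (of_rat_poly h3) z"
    using to_\<alpha>1[of "[:0, 1:]" h2] to_\<alpha>1[of "[:0, 1:]" h3] h2 h3 roots_distinct by auto
  show "poly (of_rat_poly h2) z \<noteq> poly (of_rat_poly h3) z"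
    using to_\<alpha>1[of h2 h3] h2 h3 roots_distinct by auto
qed

lemma exists_rat_poly_with_image_roots:
  fixes g :: "rat poly"
  assumes h2: "\<alpha>2 = poly (of_rat_poly h2) \<alpha>1" and h3: "\<alpha>3 = poly (of_rat_poly h3) \<alpha>1"
  defines "f \<equiv> poly (of_rat_poly g)"
  shows "\<exists>T. T \<noteq> 0 \<and> (\<forall>t. poly (of_rat_poly T) t = (t - f \<alpha>1) * (t - f \<alpha>2) * (t - f \<alpha>3))"
proof -
  define g2 where "g2 = pcompose g h2"
  define g3 where "g3 = pcompose g h3"
  have g2: "poly (of_rat_poly g2) z = f (poly (of_rat_poly h2) z)" for z
    by (simp add: g2_def f_def poly_pcompose)
  have g3: "poly (of_rat_poly g3) z = f (poly (of_rat_poly h3) z)" for z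
    by (simp add: g3_def f_def poly_pcompose)
  note sym = elementary_symmetric_perm3[OF _ images_of_conjugate_roots[OF h2 h3]]
  have "f \<alpha>1 + f \<alpha>2 + f \<alpha>3 \<in> \<rat>"
    by (rule rational_if_constant_on_conjugates[OF p_irreducible, of "g + g2 + g3"])
      (use sym(1) in \<open>simp add: g2 g3 f_def[symmetric] root_iff\<close>)
  moreover have "f \<alpha>1 * f \<alpha>2 + f \<alpha>1 * f \<alpha>3 + f \<alpha>2 * f \<alpha>3 \<in> \<rat>"
    by (rule rational_if_constant_on_conjugates[OF p_irreducible, of "g * g2 + g * g3 + g2 * g3"])
      (use sym(2) in \<open>simp add: g2 g3 f_def[symmetric] root_iff\<close>)
  moreover have "f \<alpha>1 * f \<alpha>2 * f \<alpha>3 \<in> \<rat>"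
    by (rule rational_if_constant_on_conjugates[OF p_irreducible, of "g * g2 * g3"])
      (use sym(3) in \<open>simp add: g2 g3 f_def[symmetric] root_iff\<close>)
  ultimately obtain e1 e2 e3 where
      e1: "f \<alpha>1 + f \<alpha>2 + f \<alpha>3 = of_rat e1"
    and e2: "f \<alpha>1 * f \<alpha>2 + f \<alpha>1 * f \<alpha>3 + f \<alpha>2 * f \<alpha>3 = of_rat e2"
    and e3: "f \<alpha>1 * f \<alpha>2 * f \<alpha>3 = of_rat e3"
    by (auto elim!: Rats_cases)
  define T where "T = [:-e3, e2, -e1, 1:]"
  have "poly (of_rat_poly T) t = (t - f \<alpha>1) * (t - f \<alpha>2) * (t - f \<alpha>3)" for t
  proof -
    have "poly (of_rat_poly T) t = - of_rat e3 + t * (of_rat e2 + t * (- of_rat e1 + t))"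
      by (simp add: T_def of_rat_minus)
    also have "\<dots> = (t - f \<alpha>1) * (t - f \<alpha>2) * (t - f \<alpha>3)"
      unfolding e1[symmetric] e2[symmetric] e3[symmetric] by (simp add: algebra_simps)
    finally show ?thesis .
  qed
  moreover have "T \<noteq> 0" by (simp add: T_def)
  ultimately show ?thesis by blast
qed

lemma galois_if_vandermonde_rational:
  assumes "vandermonde \<in> \<rat>"
  shows "galois_over_Q (gen_field {\<alpha>1})"
proof -
  let ?K = "rat_adjoin \<alpha>1"
  obtain h2 h3 where h2: "\<alpha>2 = poly (of_rat_poly h2) \<alpha>1" and h3: "\<alpha>3 = poly (of_rat_poly h3) \<alpha>1"
    using roots_in_rat_adjoin_if_vandermonde_rational[OF assms] by (auto simp: rat_adjoin_def)
  have "galois_over_Q ?K"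
    unfolding galois_over_Q_def
  proof (intro conjI allI impI ballI)
    show "is_subfield ?K" by (rule is_subfield_rat_adjoin_root)
  next
    fix x assume "x \<in> ?K"
    then obtain g where "x = poly (of_rat_poly g) \<alpha>1" by (auto simp: rat_adjoin_def)
    with exists_rat_poly_with_image_roots[OF h2 h3, of g]
    show "algebraic_over_Q x" unfolding algebraic_over_Q_def by auto
  next
    fix q :: "rat poly" and y :: complex
    assume q: "irreducible q" and "\<exists>x\<in>?K. poly (of_rat_poly q) x = 0"
      and y: "poly (of_rat_poly q) y = 0"
    then obtain g where g: "poly (of_rat_poly q) (poly (of_rat_poly g) \<alpha>1) = 0"
      by (auto simp: rat_adjoin_def)
    obtain T where T: "\<And>t. poly (of_rat_poly T) t = (t - poly (of_rat_poly g) \<alpha>1) *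
        (t - poly (of_rat_poly g) \<alpha>2) * (t - poly (of_rat_poly g) \<alpha>3)"
      using exists_rat_poly_with_image_roots[OF h2 h3, of g] by blast
    have "q dvd T" using irreducible_dvd_if_common_root[OF q g] T by simp
    hence "poly (of_rat_poly T) y = 0" using y by (auto elim!: dvdE)
    hence "y \<in> poly (of_rat_poly g) ` {\<alpha>1, \<alpha>2, \<alpha>3}" using T by auto
    moreover have "{\<alpha>1, \<alpha>2, \<alpha>3} \<subseteq> ?K" using h2 h3 in_rat_adjoin_self by auto
    ultimately show "y \<in> ?K"
      using subfield_poly_of_rat_poly[OF is_subfield_rat_adjoin_root] by blast
  next
    fix q :: "rat poly" assume "irreducible q"
    thus "rsquarefree (of_rat_poly q :: complex poly)" by (rule rsquarefree_of_rat_poly_irreducible)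
  qed
  thus ?thesis
    using gen_field_singleton_eq_rat_adjoin[OF p_irreducible roots(1)] by simp
qed

lemma elementary_symmetric_in_subfield:
  assumes "is_subfield F"
  shows "-(\<alpha>1 + \<alpha>2 + \<alpha>3) \<in> F" and "\<alpha>1 * \<alpha>2 + \<alpha>1 * \<alpha>3 + \<alpha>2 * \<alpha>3 \<in> F"
    and "-(\<alpha>1 * \<alpha>2 * \<alpha>3) \<in> F"
  using elementary_symmetric_rational by (meson assms subfield_Rats subfield_uminus)+

lemma root_in_subfield_if_quadratic_relation:
  assumes F: "is_subfield F" and coeffs: "r2 \<in> F" "r1 \<in> F" "r0 \<in> F"
    and nontrivial: "(r2, r1, r0) \<noteq> (0, 0, 0)" and rel: "r2 * \<alpha>1^2 + r1 * \<alpha>1 + r0 = 0"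
  shows "{\<alpha>1, \<alpha>2, \<alpha>3} \<inter> F \<noteq> {}"
proof (cases "r2 = 0")
  case True
  with nontrivial rel have "r1 \<noteq> 0" by auto
  with True rel have "\<alpha>1 = - r0 / r1" by (simp add: field_simps eq_neg_iff_add_eq_0)
  moreover have "- r0 / r1 \<in> F" using coeffs by (simp add: F subfield_divide subfield_uminus)
  ultimately show ?thesis by blast
next
  case False
  define e2 where "e2 = -(\<alpha>1 + \<alpha>2 + \<alpha>3)"
  define e1 where "e1 = \<alpha>1 * \<alpha>2 + \<alpha>1 * \<alpha>3 + \<alpha>2 * \<alpha>3"
  define e0 where "e0 = -(\<alpha>1 * \<alpha>2 * \<alpha>3)"
  define u where "u = r1 / r2"
  define v where "v = r0 / r2"
  define A where "A = e1 - v - (e2 - u) * u"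
  define B where "B = e0 - (e2 - u) * v"
  have "e2 \<in> F" "e1 \<in> F" "e0 \<in> F"
    unfolding e2_def e1_def e0_def using elementary_symmetric_in_subfield[OF F] by simp_all
  hence in_F: "e2 \<in> F" "u \<in> F" "A \<in> F" "B \<in> F"
    using coeffs by (auto simp: u_def v_def A_def B_def intro!: subfield_closed[OF F])
  have "r2 * (\<alpha>1^2 + u * \<alpha>1 + v) = 0"
    using rel False unfolding u_def v_def by (simp add: algebra_simps)
  hence quadratic: "\<alpha>1^2 + u * \<alpha>1 + v = 0" using False by simp
  have division:
    "(x - \<alpha>1) * (x - \<alpha>2) * (x - \<alpha>3) = (x + e2 - u) * (x^2 + u * x + v) + A * x + B" for x
    by (simp add: e2_def e1_def e0_def A_def B_def algebra_simps power2_eq_square)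
  hence "A * \<alpha>1 + B = 0" using quadratic by (metis add_0 diff_self mult_zero_left mult_zero_right)
  show ?thesis
  proof (cases "A = 0")
    case True
    hence "(x - \<alpha>1) * (x - \<alpha>2) * (x - \<alpha>3) = 0" if "x = u - e2" for x
      using division[of x] \<open>A * \<alpha>1 + B = 0\<close> that by simp
    thus ?thesis using in_F F subfield_diff by fastforce
  next
    case False
    hence "\<alpha>1 = - B / A" using \<open>A * \<alpha>1 + B = 0\<close> by (simp add: field_simps eq_neg_iff_add_eq_0)
    moreover have "- B / A \<in> F" using in_F by (simp add: F subfield_divide subfield_uminus)
    ultimately show ?thesis by blast
  qed
qed

lemma affine_root_permutation_is_cyclic:
  assumes F: "is_subfield F" and d: "d \<in> F" and no_root: "{\<alpha>1, \<alpha>2, \<alpha>3} \<inter> F = {}"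
    and \<alpha>2: "\<alpha>2 = c * \<alpha>1 + d"
    and maps: "\<And>x. x \<in> {\<alpha>1, \<alpha>2, \<alpha>3} \<Longrightarrow> c * x + d \<in> {\<alpha>1, \<alpha>2, \<alpha>3}"
  shows "c * \<alpha>2 + d = \<alpha>3" and "c * \<alpha>3 + d = \<alpha>1"
proof -
  have "c \<noteq> 0" using \<alpha>2 d no_root by auto
  hence inj: "c * x + d = c * y + d \<longleftrightarrow> x = y" for x y by simp
  have "c * \<alpha>2 + d \<noteq> \<alpha>2" using inj[of \<alpha>2 \<alpha>1] \<alpha>2 roots_distinct by metis
  hence "c * \<alpha>2 + d \<in> {\<alpha>1, \<alpha>3}" using maps[of \<alpha>2] by blast
  moreover have "c * \<alpha>2 + d \<noteq> \<alpha>1"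
  proof
    assume swap: "c * \<alpha>2 + d = \<alpha>1"
    have "c * \<alpha>3 + d \<noteq> \<alpha>1" "c * \<alpha>3 + d \<noteq> \<alpha>2"
      using inj[of \<alpha>3 \<alpha>2] inj[of \<alpha>3 \<alpha>1] swap \<alpha>2 roots_distinct by metis+
    hence fixed: "c * \<alpha>3 + d = \<alpha>3" using maps[of \<alpha>3] by blast
    have "(c + 1) * (\<alpha>1 - \<alpha>2) = 0" using swap \<alpha>2 by (simp add: algebra_simps)
    hence "c + 1 = 0" using roots_distinct by simp
    hence "c = -1" by (simp add: eq_neg_iff_add_eq_0)
    hence "\<alpha>3 = d / 2" using fixed by (simp add: field_simps)
    moreover have "d / 2 \<in> F" using d by (simp add: F subfield_divide subfield_numeral)
    ultimately show False using no_root by blast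
  qed
  ultimately show cycle: "c * \<alpha>2 + d = \<alpha>3" by blast
  have "c * \<alpha>3 + d \<noteq> \<alpha>2" "c * \<alpha>3 + d \<noteq> \<alpha>3"
    using inj[of \<alpha>3 \<alpha>1] inj[of \<alpha>3 \<alpha>2] cycle \<alpha>2 roots_distinct by metis+
  thus "c * \<alpha>3 + d = \<alpha>1" using maps[of \<alpha>3] by blast
qed

lemma primitive_cube_root_of_unity_if_cyclic:
  assumes "\<alpha>2 = c * \<alpha>1 + d" "\<alpha>3 = c * \<alpha>2 + d" "\<alpha>1 = c * \<alpha>3 + d"
  shows "primitive_cube_root_of_unity c" and "c \<in> gen_field {\<alpha>1, \<alpha>2, \<alpha>3}"
proof -
  have q1: "\<alpha>3 - \<alpha>2 = c * (\<alpha>2 - \<alpha>1)" and q2: "\<alpha>1 - \<alpha>3 = c * (\<alpha>3 - \<alpha>2)"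
    and q3: "\<alpha>2 - \<alpha>1 = c * (\<alpha>1 - \<alpha>3)"
    using assms by (simp_all add: algebra_simps)
  have "c ^ 3 * (\<alpha>2 - \<alpha>1) = c * (c * (c * (\<alpha>2 - \<alpha>1)))" by (simp add: power3_eq_cube)
  also have "\<dots> = \<alpha>2 - \<alpha>1" by (simp only: q1[symmetric] q2[symmetric] q3[symmetric])
  finally have "c ^ 3 * (\<alpha>2 - \<alpha>1) = \<alpha>2 - \<alpha>1" .
  hence "c ^ 3 = 1" using roots_distinct by simp
  moreover have "c \<noteq> 1"
  proof
    assume "c = 1"
    hence "3 * (\<alpha>2 - \<alpha>1) = (\<alpha>2 - \<alpha>1) + (\<alpha>3 - \<alpha>2) + (\<alpha>1 - \<alpha>3)" using q1 q2 by simp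
    thus False using roots_distinct by simp
  qed
  ultimately show "primitive_cube_root_of_unity c" by (simp add: primitive_cube_root_of_unity_def)
  have "c = (\<alpha>3 - \<alpha>2) / (\<alpha>2 - \<alpha>1)" using q1 roots_distinct by simp
  moreover have "{\<alpha>1, \<alpha>2, \<alpha>3} \<subseteq> gen_field {\<alpha>1, \<alpha>2, \<alpha>3}" by (rule gen_field_superset)
  ultimately show "c \<in> gen_field {\<alpha>1, \<alpha>2, \<alpha>3}"
    by (simp add: is_subfield_gen_field subfield_diff subfield_divide)
qed

text \<open>The substitution \<open>x \<mapsto> c x + d\<close> turns \<open>P = \<Prod>(x - \<alpha>\<^sub>i)\<close> into \<open>c\<^sup>3 P\<close> plus a polynomial of
  degree at most 2 over \<open>F\<close> vanishing at \<open>\<alpha>\<^sub>1\<close>, which must be zero.\<close>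
lemma affine_map_permutes_roots:
  assumes F: "is_subfield F" and no_root: "{\<alpha>1, \<alpha>2, \<alpha>3} \<inter> F = {}"
    and cd: "c \<in> F" "d \<in> F" and \<alpha>2: "\<alpha>2 = c * \<alpha>1 + d" and x: "x \<in> {\<alpha>1, \<alpha>2, \<alpha>3}"
  shows "c * x + d \<in> {\<alpha>1, \<alpha>2, \<alpha>3}"
proof -
  define e2 where "e2 = -(\<alpha>1 + \<alpha>2 + \<alpha>3)"
  define e1 where "e1 = \<alpha>1 * \<alpha>2 + \<alpha>1 * \<alpha>3 + \<alpha>2 * \<alpha>3"
  define e0 where "e0 = -(\<alpha>1 * \<alpha>2 * \<alpha>3)"
  have "e2 \<in> F" "e1 \<in> F" "e0 \<in> F"
    unfolding e2_def e1_def e0_def using elementary_symmetric_in_subfield[OF F] by simp_all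
  define P where "P x = (x - \<alpha>1) * (x - \<alpha>2) * (x - \<alpha>3)" for x
  define R2 where "R2 = 3 * c^2 * d + e2 * c^2 - c^3 * e2"
  define R1 where "R1 = 3 * c * d^2 + 2 * e2 * c * d + e1 * c - c^3 * e1"
  define R0 where "R0 = d^3 + e2 * d^2 + e1 * d + e0 - c^3 * e0"
  have R_F: "R2 \<in> F" "R1 \<in> F" "R0 \<in> F"
    using cd \<open>e2 \<in> F\<close> \<open>e1 \<in> F\<close> \<open>e0 \<in> F\<close>
    by (auto simp: R2_def R1_def R0_def intro!: subfield_closed[OF F])
  have R: "P (c * x + d) - c^3 * P x = R2 * x^2 + R1 * x + R0" for x
    by (simp add: P_def R2_def R1_def R0_def e2_def e1_def e0_def algebra_simps
        power2_eq_square power3_eq_cube)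
  have "R2 * \<alpha>1^2 + R1 * \<alpha>1 + R0 = 0" using R[of \<alpha>1] \<alpha>2 by (simp add: P_def)
  hence "(R2, R1, R0) = (0, 0, 0)"
    using root_in_subfield_if_quadratic_relation[OF F R_F] no_root by blast
  hence "P (c * x + d) = c^3 * P x" using R[of x] by simp
  hence "P (c * x + d) = 0" using x by (auto simp: P_def)
  thus ?thesis by (simp add: P_def)
qed

lemma primitive_cube_root_of_unity_if_relation:
  assumes F: "is_subfield F" and no_root: "{\<alpha>1, \<alpha>2, \<alpha>3} \<inter> F = {}"
    and a: "a \<in> F" and b: "b \<in> F" "b \<noteq> 1" and rel: "a * \<alpha>1 + b * \<alpha>2 + \<alpha>3 = 0"
  shows "\<exists>\<omega> \<in> gen_field {\<alpha>1, \<alpha>2, \<alpha>3}. primitive_cube_root_of_unity \<omega>"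
proof -
  define c where "c = - (a - 1) / (b - 1)"
  define d where "d = - (\<alpha>1 + \<alpha>2 + \<alpha>3) / (b - 1)"
  have "\<alpha>1 + \<alpha>2 + \<alpha>3 \<in> F" by (rule subfield_Rats[OF F elementary_symmetric_rational(1)])
  hence cd: "c \<in> F" "d \<in> F"
    unfolding c_def d_def using a b
    by (meson F subfield_diff subfield_divide subfield_one subfield_uminus)+
  have "(b - 1) * c = - (a - 1)" "(b - 1) * d = - (\<alpha>1 + \<alpha>2 + \<alpha>3)"
    using b(2) by (simp_all add: c_def d_def)
  hence "(b - 1) * (c * \<alpha>1 + d) = - (a - 1) * \<alpha>1 - (\<alpha>1 + \<alpha>2 + \<alpha>3)"
    by (simp add: distrib_left mult.assoc[symmetric])
  also have "\<dots> = (b - 1) * \<alpha>2"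
  proof -
    have \<alpha>3: "\<alpha>3 = - (a * \<alpha>1 + b * \<alpha>2)" using rel by (simp only: add_eq_0_iff)
    show ?thesis unfolding \<alpha>3 by (simp add: algebra_simps)
  qed
  finally have \<alpha>2: "\<alpha>2 = c * \<alpha>1 + d" using b(2) by simp
  from affine_root_permutation_is_cyclic[OF F cd(2) no_root \<alpha>2
      affine_map_permutes_roots[OF F no_root cd \<alpha>2]]
  show ?thesis using primitive_cube_root_of_unity_if_cyclic \<alpha>2 by metis
qed

lemma relation_coefficients_eq_1:
  assumes F: "is_subfield F" and no_root: "{\<alpha>1, \<alpha>2, \<alpha>3} \<inter> F = {}"
    and no_cube: "\<not> (\<exists>\<omega> \<in> gen_field {\<alpha>1, \<alpha>2, \<alpha>3}. primitive_cube_root_of_unity \<omega>)"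
    and a: "a \<in> F" and b: "b \<in> F" and rel: "a * \<alpha>1 + b * \<alpha>2 + \<alpha>3 = 0"
  shows "a = 1" and "b = 1"
proof -
  show "b = 1" using primitive_cube_root_of_unity_if_relation[OF F no_root a b _ rel] no_cube by blast
  interpret swapped: rat_cubic p \<alpha>2 \<alpha>1 \<alpha>3
    using p_irreducible p_degree roots roots_distinct by unfold_locales auto
  have "{\<alpha>2, \<alpha>1, \<alpha>3} = {\<alpha>1, \<alpha>2, \<alpha>3}" by auto
  moreover have "b * \<alpha>2 + a * \<alpha>1 + \<alpha>3 = 0" using rel by (simp add: algebra_simps)
  ultimately show "a = 1"
    using swapped.primitive_cube_root_of_unity_if_relation[OF F _ b a] no_root no_cube by metis
qed

end

text \<open>The situation of \<open>\<rat>(\<zeta>)\<close> for a root of unity \<open>\<zeta>\<close>: all conjugates of \<open>\<zeta>\<close> are powers of \<open>\<zeta>\<close>,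
  so the conjugations \<open>\<zeta> \<mapsto> \<zeta>\<^sup>k\<close> commute.\<close>
locale power_conjugates =
  fixes \<zeta> :: complex and m :: "rat poly"
  assumes m_irreducible: "irreducible m" and m_root: "poly (of_rat_poly m) \<zeta> = 0"
    and conjugate_power: "\<And>z. poly (of_rat_poly m) z = 0 \<Longrightarrow> \<exists>k. z = \<zeta> ^ k"
begin

lemma is_subfield_rat_adjoin_generator: "is_subfield (rat_adjoin \<zeta>)"
  by (rule is_subfield_rat_adjoin[OF m_irreducible m_root])

lemma poly_at_conjugate_in_rat_adjoin:
  assumes "poly (of_rat_poly m) w = 0"
  shows "poly (of_rat_poly h) w \<in> rat_adjoin \<zeta>"
proof -
  obtain j where "w = \<zeta> ^ j" using conjugate_power[OF assms] by blast
  hence "poly (of_rat_poly h) w = poly (of_rat_poly (pcompose h (monom 1 j))) \<zeta>"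
    by (simp add: poly_pcompose poly_monom)
  thus ?thesis by (metis poly_in_rat_adjoin)
qed

text \<open>Writing \<open>\<sigma>\<^sub>z\<close> for the conjugation \<open>\<zeta> \<mapsto> z\<close>: if \<open>\<sigma>\<^sub>z\<close> fixes \<open>f(\<zeta>)\<close> and \<open>\<sigma>\<^sub>w\<close> maps
  \<open>f(\<zeta>)\<close> to \<open>h(\<zeta>)\<close>, then \<open>\<sigma>\<^sub>z\<close> fixes \<open>h(\<zeta>)\<close>, because the conjugations
  \<open>\<zeta> \<mapsto> \<zeta>\<^sup>k\<close> commute.\<close>
lemma conjugation_fixes_image:
  assumes z: "poly (of_rat_poly m) z = 0" and w: "poly (of_rat_poly m) w = 0"
    and fz: "poly (of_rat_poly f) z = poly (of_rat_poly f) \<zeta>"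
    and fw: "poly (of_rat_poly f) w = poly (of_rat_poly h) \<zeta>"
  shows "poly (of_rat_poly h) z = poly (of_rat_poly h) \<zeta>"
proof -
  obtain k where k: "z = \<zeta> ^ k" using conjugate_power[OF z] by blast
  obtain j where j: "w = \<zeta> ^ j" using conjugate_power[OF w] by blast
  have "poly (of_rat_poly (pcompose f (monom 1 k))) \<zeta> = poly (of_rat_poly f) \<zeta>"
    using fz k by (simp add: poly_pcompose poly_monom)
  hence "poly (of_rat_poly (pcompose f (monom 1 k))) w = poly (of_rat_poly f) w"
    by (rule poly_eq_at_conjugate[OF m_irreducible m_root w])
  hence "poly (of_rat_poly f) (w ^ k) = poly (of_rat_poly h) \<zeta>"
    using fw by (simp add: poly_pcompose poly_monom)
  moreover have "poly (of_rat_poly (pcompose f (monom 1 j))) \<zeta> = poly (of_rat_poly h) \<zeta>"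
    using fw j by (simp add: poly_pcompose poly_monom)
  hence "poly (of_rat_poly (pcompose f (monom 1 j))) z = poly (of_rat_poly h) z"
    by (rule poly_eq_at_conjugate[OF m_irreducible m_root z])
  hence "poly (of_rat_poly f) (z ^ j) = poly (of_rat_poly h) z"
    by (simp add: poly_pcompose poly_monom)
  moreover have "w ^ k = z ^ j" using j k by (simp add: power_mult[symmetric] mult.commute)
  ultimately show ?thesis by simp
qed

end

locale cubic_power_conjugates = rat_cubic + power_conjugates
begin

lemma conjugation_moves_root:
  assumes "poly (of_rat_poly p) (poly (of_rat_poly f) \<zeta>) = 0"
  obtains w
  where "poly (of_rat_poly m) w = 0" "poly (of_rat_poly f) w \<noteq> poly (of_rat_poly f) \<zeta>"
  using rational_if_constant_on_conjugates[OF m_irreducible, of f] root_not_rational[OF assms]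
  by blast

lemma conjugation_fixing_root_fixes_another:
  assumes z: "poly (of_rat_poly m) z = 0"
    and root: "poly (of_rat_poly p) (poly (of_rat_poly f) \<zeta>) = 0"
    and fixes_f: "poly (of_rat_poly f) z = poly (of_rat_poly f) \<zeta>"
    and roots_f: "\<And>w. poly (of_rat_poly m) w = 0 \<Longrightarrow> poly (of_rat_poly f) w \<in>
      {poly (of_rat_poly f) \<zeta>, poly (of_rat_poly g1) \<zeta>, poly (of_rat_poly g2) \<zeta>}"
  shows "poly (of_rat_poly g1) z = poly (of_rat_poly g1) \<zeta> \<or>
    poly (of_rat_poly g2) z = poly (of_rat_poly g2) \<zeta>"
proof -
  obtain w where w: "poly (of_rat_poly m) w = 0"
    "poly (of_rat_poly f) w \<noteq> poly (of_rat_poly f) \<zeta>"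
    using conjugation_moves_root[OF root] .
  hence "poly (of_rat_poly f) w \<in> {poly (of_rat_poly g1) \<zeta>, poly (of_rat_poly g2) \<zeta>}"
    using roots_f by blast
  thus ?thesis using conjugation_fixes_image[OF z w(1) fixes_f] by blast
qed

lemma roots_in_rat_adjoin_if_root_in_rat_adjoin:
  assumes "\<gamma> \<in> rat_adjoin \<zeta>" "poly (of_rat_poly p) \<gamma> = 0"
  shows "{\<alpha>1, \<alpha>2, \<alpha>3} \<subseteq> rat_adjoin \<zeta>"
proof
  note F = is_subfield_rat_adjoin_generator
  obtain g where g: "\<gamma> = poly (of_rat_poly g) \<zeta>" using assms(1) by (auto simp: rat_adjoin_def)
  obtain w where w: "poly (of_rat_poly m) w = 0" "poly (of_rat_poly g) w \<noteq> \<gamma>"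
    using conjugation_moves_root assms(2) g by metis
  define \<gamma>' where "\<gamma>' = poly (of_rat_poly g) w"
  have \<gamma>'_F: "\<gamma>' \<in> rat_adjoin \<zeta>" unfolding \<gamma>'_def by (rule poly_at_conjugate_in_rat_adjoin[OF w(1)])
  have roots_\<gamma>: "\<gamma> \<in> {\<alpha>1, \<alpha>2, \<alpha>3}" "\<gamma>' \<in> {\<alpha>1, \<alpha>2, \<alpha>3}" "\<gamma> \<noteq> \<gamma>'"
    using assms(2) root_pcompose_at_conjugate[OF m_irreducible m_root w(1), of p g] g w(2)
    by (auto simp: root_iff \<gamma>'_def)
  fix x assume x: "x \<in> {\<alpha>1, \<alpha>2, \<alpha>3}"
  show "x \<in> rat_adjoin \<zeta>"
  proof (cases "x = \<gamma> \<or> x = \<gamma>'")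
    case True thus ?thesis using assms(1) \<gamma>'_F by auto
  next
    case False
    hence "x + \<gamma> + \<gamma>' = \<alpha>1 + \<alpha>2 + \<alpha>3"
      using elementary_symmetric_perm3(1)[of x \<alpha>1 \<alpha>2 \<alpha>3 \<gamma> \<gamma>' "\<lambda>x. x"] x roots_\<gamma> by auto
    hence "x = (\<alpha>1 + \<alpha>2 + \<alpha>3) - \<gamma> - \<gamma>'" by (simp add: algebra_simps)
    thus ?thesis
      using assms(1) \<gamma>'_F elementary_symmetric_rational(1) by (metis F subfield_diff subfield_Rats)
  qed
qed

text \<open>Each conjugation \<open>\<zeta> \<mapsto> z\<close> permutes the roots; since a conjugation fixing one root
  fixes another, it is never a transposition and so preserves the Vandermonde product.\<close>
lemma vandermonde_rational_if_roots_in_rat_adjoin: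
  assumes "{\<alpha>1, \<alpha>2, \<alpha>3} \<subseteq> rat_adjoin \<zeta>"
  shows "vandermonde \<in> \<rat>"
proof -
  obtain f1 f2 f3 where f: "\<alpha>1 = poly (of_rat_poly f1) \<zeta>" "\<alpha>2 = poly (of_rat_poly f2) \<zeta>"
      "\<alpha>3 = poly (of_rat_poly f3) \<zeta>"
    using assms by (auto simp: rat_adjoin_def)
  let ?v = "\<lambda>f z. poly (of_rat_poly f) z"
  have roots_f: "?v f z \<in> {\<alpha>1, \<alpha>2, \<alpha>3}"
    if "poly (of_rat_poly m) z = 0" "f \<in> {f1, f2, f3}" for z :: complex and f
    using root_pcompose_at_conjugate[OF m_irreducible m_root that(1), of p f] that(2) f roots
    by (auto simp: root_iff)
  have distinct: "?v f z \<noteq> ?v f' z"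
    if "poly (of_rat_poly m) z = 0" "?v f \<zeta> \<noteq> ?v f' \<zeta>" for z :: complex and f f'
    using poly_eq_at_conjugate[OF m_irreducible that(1) m_root, of f f'] that(2) by blast
  have "(?v f1 z - ?v f2 z) * (?v f1 z - ?v f3 z) * (?v f2 z - ?v f3 z) = vandermonde"
    if z: "poly (of_rat_poly m) z = 0" for z
    unfolding vandermonde_def
  proof (rule vandermonde3_even_perm)
    show "?v f1 z \<in> {\<alpha>1, \<alpha>2, \<alpha>3}" "?v f2 z \<in> {\<alpha>1, \<alpha>2, \<alpha>3}" "?v f3 z \<in> {\<alpha>1, \<alpha>2, \<alpha>3}"
      using roots_f[OF z] by auto
    show "?v f1 z \<noteq> ?v f2 z" "?v f1 z \<noteq> ?v f3 z" "?v f2 z \<noteq> ?v f3 z"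
      using distinct[OF z] f roots_distinct by auto
    note another = conjugation_fixing_root_fixes_another[OF z]
    have "?v f1 z = \<alpha>1 \<Longrightarrow> ?v f2 z = \<alpha>2 \<or> ?v f3 z = \<alpha>3"
      using another[of f1 f2 f3] f roots roots_f by auto
    moreover have "?v f2 z = \<alpha>2 \<Longrightarrow> ?v f1 z = \<alpha>1 \<or> ?v f3 z = \<alpha>3"
      using another[of f2 f1 f3] f roots roots_f by auto
    moreover have "?v f3 z = \<alpha>3 \<Longrightarrow> ?v f1 z = \<alpha>1 \<or> ?v f2 z = \<alpha>2"
      using another[of f3 f1 f2] f roots roots_f by auto
    ultimately show "(?v f1 z = \<alpha>1 \<and> ?v f2 z = \<alpha>2) \<or> (?v f1 z = \<alpha>1 \<and> ?v f3 z = \<alpha>3) \<or>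
        (?v f2 z = \<alpha>2 \<and> ?v f3 z = \<alpha>3) \<or> (?v f1 z \<noteq> \<alpha>1 \<and> ?v f2 z \<noteq> \<alpha>2 \<and> ?v f3 z \<noteq> \<alpha>3)"
      by blast
  qed
  thus ?thesis
    by (intro rational_if_constant_on_conjugates[OF m_irreducible,
          of "(f1 - f2) * (f1 - f3) * (f2 - f3)"]) simp
qed

end

lemma poly_of_rat_poly_prod_mset_eq_0:
  "poly (of_rat_poly (prod_mset M)) z = (0 :: 'a::field_char_0) \<Longrightarrow> \<exists>q \<in># M. poly (of_rat_poly q) z = 0"
  by (induction M) auto

lemma irreducible_factor_with_root:
  fixes q :: "rat poly" and z :: "'a::field_char_0"
  assumes "q \<noteq> 0" "poly (of_rat_poly q) z = 0"
  obtains m where "irreducible m" "m dvd q" "poly (of_rat_poly m) z = 0"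
proof -
  have "q dvd normalize q" by simp
  then obtain u where "normalize q = q * u" ..
  hence "poly (of_rat_poly (prod_mset (prime_factorization q))) z = 0"
    using prod_mset_prime_factorization[OF assms(1)] assms(2) by simp
  then obtain m where "m \<in># prime_factorization q" "poly (of_rat_poly m) z = 0"
    using poly_of_rat_poly_prod_mset_eq_0 by blast
  thus ?thesis
    using that in_prime_factors_imp_dvd in_prime_factors_imp_prime prime_elem_imp_irreducible
    by blast
qed

lemma root_of_unity_nonzero: "root_of_unity z \<Longrightarrow> z \<noteq> 0"
  by (auto simp: root_of_unity_def power_0_left)

lemma root_of_unity_eq_cis_power:
  assumes "N > 0" "z ^ N = 1"
  shows "\<exists>k. z = cis (2 * pi / real N) ^ k"
proof -
  obtain k where "z = cis (2 * pi * real k / real N)"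
    using bij_betw_roots_unity[OF assms(1)] assms(2) unfolding bij_betw_def by auto
  also have "\<dots> = cis (2 * pi / real N) ^ k" by (simp add: DeMoivre mult.commute)
  finally show ?thesis by blast
qed

lemma root_of_unity_in_rat_adjoin:
  assumes "N > 0" "\<xi> ^ N = 1"
  shows "\<xi> \<in> rat_adjoin (cis (2 * pi / real N))"
proof -
  obtain k where "\<xi> = cis (2 * pi / real N) ^ k" using root_of_unity_eq_cis_power[OF assms] by blast
  hence "\<xi> = poly (of_rat_poly (monom 1 k)) (cis (2 * pi / real N))" by (simp add: poly_monom)
  thus ?thesis by (metis poly_in_rat_adjoin)
qed

lemma power_conjugates_cis:
  assumes "N > 0"
  obtains m where "power_conjugates (cis (2 * pi / real N)) m"
proof -
  define \<zeta> where "\<zeta> = cis (2 * pi / real N)"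
  define q :: "rat poly" where "q = monom 1 N - 1"
  have poly_q: "poly (of_rat_poly q) z = z ^ N - 1" for z :: complex
    by (simp add: q_def poly_monom)
  have "q \<noteq> 0" using poly_q[of 0] assms by (auto simp: power_0_left)
  moreover have "poly (of_rat_poly q) \<zeta> = 0" using assms by (simp add: poly_q \<zeta>_def DeMoivre)
  ultimately obtain m where m: "irreducible m" "m dvd q" "poly (of_rat_poly m) \<zeta> = 0"
    by (rule irreducible_factor_with_root)
  have "z ^ N = 1" if "poly (of_rat_poly m) z = 0" for z :: complex
    using m(2) that poly_q[of z] by (auto elim!: dvdE)
  hence "power_conjugates \<zeta> m"
    using m root_of_unity_eq_cis_power[OF assms] by unfold_locales (auto simp: \<zeta>_def)
  thus ?thesis using that by (simp add: \<zeta>_def)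
qed

lemma roots_of_unity_common_exponent:
  assumes "finite A" "\<forall>z\<in>A. root_of_unity z"
  shows "\<exists>N > 0. \<forall>z\<in>A. z ^ N = 1"
  using assms
proof (induction A rule: finite_induct)
  case empty
  show ?case by (intro exI[of _ 1]) simp
next
  case (insert z A)
  then obtain N n where "N > 0" "\<forall>x\<in>A. x ^ N = 1" "n > 0" "z ^ n = 1"
    by (auto simp: root_of_unity_def)
  hence "N * n > 0" "\<forall>x\<in>insert z A. x ^ (N * n) = 1"
    by (auto simp: power_mult) (metis mult.commute power_mult power_one)
  thus ?case by blast
qed

theorem lemma11:
  fixes p :: "rat poly" and \<alpha>1 \<alpha>2 \<alpha>3 \<xi>1 \<xi>2 \<xi>3 :: complex
  assumes irr: "irreducible p" and deg: "degree p = 3"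
    and roots: "poly (map_poly of_rat p) \<alpha>1 = 0" "poly (map_poly of_rat p) \<alpha>2 = 0"
               "poly (map_poly of_rat p) \<alpha>3 = 0"
    and dist: "\<alpha>1 \<noteq> \<alpha>2" "\<alpha>1 \<noteq> \<alpha>3" "\<alpha>2 \<noteq> \<alpha>3"
    and not_galois: "\<not> galois_over_Q (gen_field {\<alpha>1})"
    and no_cube: "\<not> (\<exists>\<omega>\<in>gen_field {\<alpha>1, \<alpha>2, \<alpha>3}. primitive_cube_root_of_unity \<omega>)"
    and unity: "root_of_unity \<xi>1" "root_of_unity \<xi>2" "root_of_unity \<xi>3"
    and rel: "\<alpha>1 * \<xi>1 + \<alpha>2 * \<xi>2 + \<alpha>3 * \<xi>3 = 0"
  shows "\<xi>1 = \<xi>2 \<and> \<xi>2 = \<xi>3 \<and> \<alpha>1 + \<alpha>2 + \<alpha>3 = 0"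
proof -
  obtain N where N: "N > 0" "\<forall>\<xi>\<in>{\<xi>1, \<xi>2, \<xi>3}. \<xi> ^ N = 1"
    using roots_of_unity_common_exponent[of "{\<xi>1, \<xi>2, \<xi>3}"] unity by auto
  define \<zeta> where "\<zeta> = cis (2 * pi / real N)"
  obtain m where "power_conjugates \<zeta> m" using power_conjugates_cis[OF N(1)] by (auto simp: \<zeta>_def)
  moreover have "rat_cubic p \<alpha>1 \<alpha>2 \<alpha>3" using assms by unfold_locales
  ultimately interpret cubic_power_conjugates p \<alpha>1 \<alpha>2 \<alpha>3 \<zeta> m
    by (simp add: cubic_power_conjugates_def)
  let ?F = "rat_adjoin \<zeta>"
  have no_root: "{\<alpha>1, \<alpha>2, \<alpha>3} \<inter> ?F = {}"
    using roots_in_rat_adjoin_if_root_in_rat_adjoin vandermonde_rational_if_roots_in_rat_adjoin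
      galois_if_vandermonde_rational not_galois root_iff by blast
  have \<xi>: "\<xi>1 \<in> ?F" "\<xi>2 \<in> ?F" "\<xi>3 \<in> ?F"
    using root_of_unity_in_rat_adjoin[OF N(1)] N(2) unfolding \<zeta>_def by blast+
  have "\<xi>3 \<noteq> 0" using unity(3) by (rule root_of_unity_nonzero)
  have "\<xi>1 / \<xi>3 \<in> ?F" "\<xi>2 / \<xi>3 \<in> ?F"
    using \<xi> by (simp_all add: subfield_divide[OF is_subfield_rat_adjoin_generator])
  moreover have "(\<xi>1 / \<xi>3) * \<alpha>1 + (\<xi>2 / \<xi>3) * \<alpha>2 + \<alpha>3 = 0"
    using rel \<open>\<xi>3 \<noteq> 0\<close> by (simp add: field_simps)
  ultimately have "\<xi>1 / \<xi>3 = 1" "\<xi>2 / \<xi>3 = 1"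
    by (rule relation_coefficients_eq_1[OF is_subfield_rat_adjoin_generator no_root no_cube])+
  hence "\<xi>1 = \<xi>3" "\<xi>2 = \<xi>3" using \<open>\<xi>3 \<noteq> 0\<close> by simp_all
  moreover from this have "(\<alpha>1 + \<alpha>2 + \<alpha>3) * \<xi>3 = 0" using rel by (simp add: algebra_simps)
  ultimately show ?thesis using \<open>\<xi>3 \<noteq> 0\<close> by simp
qed

end
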